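(* Let $0<\alpha<1$, $T>0$, $\hbar>0$, and for $x\in(0,1]$ and $u\in\mathbb{R}$ let $$\overline f(u,x)=\frac{\sin(\alpha\pi)}{\alpha\pi}\,\frac{x e^{u-T}}{e^{\frac{1}{\alpha}(u-T)}+x}.$$ Then the sum of the discrete Fourier transforms decays at an exponential rate: $$\sum_{n\ne0}\mathfrak{F}[\overline f]\Big(\frac{2n\pi}{\hbar}\Big)=\frac{\mathcal{O}(1)}{e^{\frac{2\pi^2\alpha}{\hbar}}-1},$$ where the constant in the $\mathcal{O}$ term is independent of $n$, $\hbar$, $x$, $\alpha$ and $\sigma$.
   Context: $\mathfrak{F}[w](\xi)=\int_{-\infty}^{+\infty}w(u)e^{-i\xi u}\,\mathrm{d}u$ denotes the Fourier transform in the variable $u$ (here applied to $u\mapsto\overline f(u,x)$ for fixed $x$). In the paper's setting $\sigma>0$ is a clustering parameter with $T=\sigma\alpha\sqrt{N_1}$ and $\hbar=\sigma\alpha/\sqrt{N_1}$ for a positive integer $N_1$. *)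

theory Defs
  imports "HOL-Analysis.Analysis"
begin

definition fbar :: "real \<Rightarrow> real \<Rightarrow> real \<Rightarrow> real \<Rightarrow> real" where
  "fbar \<alpha> T x u =
     sin (\<alpha> * pi) / (\<alpha> * pi) * (x * exp (u - T) / (exp ((u - T) / \<alpha>) + x))"

definition fourier :: "(real \<Rightarrow> real) \<Rightarrow> real \<Rightarrow> complex" where
  "fourier w \<xi> = (LINT u|lborel. complex_of_real (w u) * exp (- \<i> * complex_of_real (\<xi> * u)))"

end

theory Submission
  imports Defs "HOL-Complex_Analysis.Complex_Analysis"
begin

(* The substitution u = T + alpha ln x + alpha s turns F[fbar](xi) into
   sin(alpha pi)/pi * x^alpha * exp(-i xi (T + alpha ln x)) times the Beta integral
   I(b) = int exp(b s)/(1 + exp s) ds with b = alpha (1 - i xi).  Integrating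
   exp(b w)/(1 + exp w) around the rectangle with corners -R, R, R + 2 pi i, -R + 2 pi i,
   whose top side is exp(2 pi i b) times its bottom side and which encloses the single
   simple pole i pi, gives I(b) = pi / sin(pi b).  Since
   |sin(pi b)| >= sin(alpha pi) cosh(pi alpha xi), we get |F[fbar](xi)| <= 2 exp(-pi alpha |xi|);
   at xi = 2 n pi / h these bounds form a geometric series with ratio
   q = exp(-2 pi^2 alpha / h), whose sum over n <> 0 is 4 q / (1 - q) = 4 / (exp(2 pi^2 alpha / h) - 1). *)

(* Substituting t = exp s shows that its integral over the real line is Euler's B(b, 1 - b). *)
definition beta_kernel :: "complex \<Rightarrow> complex \<Rightarrow> complex" where
  "beta_kernel b w = exp (b * w) / (1 + exp w)"

definition beta_kernel_side :: "complex \<Rightarrow> real \<Rightarrow> complex" where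
  "beta_kernel_side b r = contour_integral (linepath (Complex r 0) (Complex r (2 * pi))) (beta_kernel b)"

lemma integrable_indicator_exp_neg:
  fixes c :: real
  assumes "0 < c"
  shows "integrable lborel (\<lambda>s. indicator {0..} s * exp (- c * s))"
proof (rule integrableI_nonneg)
  have "(\<integral>\<^sup>+s\<in>{0..}. ennreal (exp (- c * s)) \<partial>lborel) = ennreal (0 - (- exp (- c * 0) / c))"
  proof (rule nn_integral_FTC_atLeast)
    show "((\<lambda>s. - exp (- c * s) / c) has_real_derivative exp (- c * s)) (at s)" for s
      using assms by (auto intro!: derivative_eq_intros)
    show "((\<lambda>s. - exp (- c * s) / c) \<longlongrightarrow> 0) at_top"
      using assms by real_asymp
  qed auto
  then show "(\<integral>\<^sup>+s. ennreal (indicator {0..} s * exp (- c * s)) \<partial>lborel) < \<infinity>"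
    by (simp add: mult.commute ennreal_mult' ennreal_indicator)
qed auto

lemma norm_beta_kernel_of_real:
  "norm (beta_kernel b (of_real s)) = exp (Re b * s) / (1 + exp s)"
proof -
  have "1 + exp (complex_of_real s) = complex_of_real (1 + exp s)"
    by (simp add: exp_of_real)
  moreover have "\<bar>1 + exp s\<bar> = 1 + exp s"
    by (simp add: add_pos_pos)
  ultimately show ?thesis
    by (simp add: beta_kernel_def norm_divide norm_exp_eq_Re del: of_real_add)
qed

lemma integrable_beta_kernel:
  assumes "0 < Re b" "Re b < 1"
  shows "integrable lborel (\<lambda>s. beta_kernel b (of_real s))"
proof -
  define w where "w s = indicator {0..} s * exp (- (1 - Re b) * s)
    + indicator {0..} (- s) * exp (- Re b * - s)" for s :: real
  have "integrable lborel (\<lambda>s. indicator {0..} (0 + - 1 * s) * exp (- Re b * (0 + - 1 * s)))"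
    using assms integrable_indicator_exp_neg [of "Re b"] by (subst lborel_integrable_real_affine_iff) auto
  then have "integrable lborel w"
    unfolding w_def using assms by (intro Bochner_Integration.integrable_add integrable_indicator_exp_neg) auto
  then show ?thesis
  proof (rule Bochner_Integration.integrable_bound)
    show "(\<lambda>s. beta_kernel b (of_real s)) \<in> borel_measurable lborel"
      unfolding beta_kernel_def by measurable
    have "norm (beta_kernel b (of_real s)) \<le> norm (w s)" for s
    proof (cases "0 \<le> s")
      case True
      have "exp (Re b * s) / (1 + exp s) \<le> exp (Re b * s) / exp s"
        by (intro divide_left_mono) (auto simp: add_pos_pos)
      also have "\<dots> = exp (- (1 - Re b) * s)"
        by (simp add: exp_diff [symmetric] algebra_simps)
      finally show ?thesis
        using True by (simp add: norm_beta_kernel_of_real w_def indicator_def)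
    next
      case False
      have "exp (Re b * s) / (1 + exp s) \<le> exp (Re b * s)"
        by (simp add: divide_le_eq add_pos_pos)
      then show ?thesis
        using False by (simp add: norm_beta_kernel_of_real w_def indicator_def)
    qed
    then show "AE s in lborel. norm (beta_kernel b (of_real s)) \<le> norm (w s)"
      by simp
  qed
qed

lemma beta_kernel_add_2pi_i:
  "beta_kernel b (w + 2 * pi * \<i>) = exp (2 * pi * \<i> * b) * beta_kernel b w"
  by (simp add: beta_kernel_def exp_add distrib_left mult_ac)

lemma one_plus_exp_eq_0_in_strip:
  assumes "1 + exp z = 0" "- 1 < Im z" "Im z < 2 * pi + 1"
  shows "z = \<i> * pi"
proof -
  have "exp (z - \<i> * pi) = 1"
    using assms(1) by (simp add: exp_diff add_eq_0_iff)
  then obtain n :: int where n: "Re z = 0" "Im z - pi = of_int (2 * n) * pi"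
    by (auto simp: exp_eq_1)
  have "\<bar>Im z - pi\<bar> < 2 * pi"
    using assms(2,3) pi_gt3 by (auto simp: abs_less_iff)
  then have "real_of_int \<bar>2 * n\<bar> * pi < 2 * pi"
    by (simp add: n(2) abs_mult)
  then have "\<bar>2 * n\<bar> < 2"
    using pi_gt_zero by (metis mult_less_cancel_right_pos of_int_less_iff of_int_numeral)
  then have "n = 0"
    by presburger
  then show ?thesis
    using n by (simp add: complex_eq_iff)
qed

lemma beta_kernel_rectangle:
  assumes "0 < R"
  shows "(1 - exp (2 * pi * \<i> * b)) * integral {- R..R} (\<lambda>s. beta_kernel b (of_real s))
           + beta_kernel_side b R - beta_kernel_side b (- R) = - 2 * pi * \<i> * exp (\<i> * pi * b)"
proof -
  define S where "S = {z. - 1 < Im z} \<inter> {z. Im z < 2 * pi + 1}"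
  define a1 where "a1 = Complex (- R) 0"
  define a2 where "a2 = Complex R 0"
  define a3 where "a3 = Complex R (2 * pi)"
  define a4 where "a4 = Complex (- R) (2 * pi)"
  have "open S" "convex S"
    unfolding S_def by (intro open_Int convex_Int open_halfspace_Im_gt open_halfspace_Im_lt
        convex_halfspace_Im_gt convex_halfspace_Im_lt)+
  then have "connected S"
    by (simp add: convex_connected)
  have holo: "beta_kernel b holomorphic_on S - {\<i> * pi}"
    using one_plus_exp_eq_0_in_strip unfolding beta_kernel_def [abs_def] S_def
    by (intro holomorphic_intros) auto
  have inbox: "\<i> * pi \<in> box a1 a3"
    using assms by (auto simp: a1_def a3_def in_box_complex_iff)
  have cbox_S: "cbox a1 a3 \<subseteq> S"
    by (auto simp: a1_def a3_def S_def in_cbox_complex_iff)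
  have rect: "rectpath a1 a3 = linepath a1 a2 +++ linepath a2 a3 +++ linepath a3 a4 +++ linepath a4 a1"
    by (simp add: rectpath_def Let_def a1_def a2_def a3_def a4_def)
  have "path_image (rectpath a1 a3) = cbox a1 a3 - box a1 a3"
    using assms by (intro path_image_rectpath_cbox_minus_box) (auto simp: a1_def a3_def)
  then have pimg: "path_image (rectpath a1 a3) \<subseteq> S - {\<i> * pi}"
    using cbox_S inbox by auto
  then have segs: "closed_segment a1 a2 \<subseteq> S - {\<i> * pi}" "closed_segment a2 a3 \<subseteq> S - {\<i> * pi}"
    "closed_segment a3 a4 \<subseteq> S - {\<i> * pi}" "closed_segment a4 a1 \<subseteq> S - {\<i> * pi}"
    unfolding rect by (simp_all add: path_image_join)
  have cont: "continuous_on (closed_segment p q) (beta_kernel b)"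
    if "closed_segment p q \<subseteq> S - {\<i> * pi}" for p q
    using holomorphic_on_imp_continuous_on [OF holo] that by (rule continuous_on_subset)
  then have integrable: "beta_kernel b contour_integrable_on linepath p q"
    if "closed_segment p q \<subseteq> S - {\<i> * pi}" for p q
    using that by (simp add: contour_integrable_continuous_linepath)
  define I where "I = integral {- R..R} (\<lambda>s. beta_kernel b (of_real s))"
  define E where "E = exp (2 * pi * \<i> * b)"
  have bottom: "contour_integral (linepath a1 a2) (beta_kernel b) = I"
    unfolding I_def using assms
    by (subst contour_integral_linepath_Reals_eq) (auto simp: a1_def a2_def complex_is_Real_iff)
  have "a1 + 2 * pi * \<i> = a4" "a2 + 2 * pi * \<i> = a3"
    by (simp_all add: complex_eq_iff a1_def a2_def a3_def a4_def)
  then have "linepath a4 a3 = (+) (2 * pi * \<i>) \<circ> linepath a1 a2"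
    by (simp add: linepath_translate)
  then have "contour_integral (linepath a4 a3) (beta_kernel b)
      = contour_integral (linepath a1 a2) (\<lambda>w. E * beta_kernel b w)"
    by (simp only: contour_integral_translate beta_kernel_add_2pi_i E_def)
  also have "\<dots> = E * I"
    using integrable [OF segs(1)] by (simp add: contour_integral_lmul bottom)
  finally have "contour_integral (linepath a4 a3) (beta_kernel b) = E * I" .
  then have top: "contour_integral (linepath a3 a4) (beta_kernel b) = - E * I"
    using contour_integral_reverse_linepath [OF cont [OF segs(3)]] by simp
  have left: "contour_integral (linepath a4 a1) (beta_kernel b) = - beta_kernel_side b (- R)"
    using contour_integral_reverse_linepath [OF cont [OF segs(4)]]
    by (simp add: beta_kernel_side_def a1_def a4_def)
  have right: "contour_integral (linepath a2 a3) (beta_kernel b) = beta_kernel_side b R"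
    by (simp add: beta_kernel_side_def a2_def a3_def)
  have "contour_integral (rectpath a1 a3) (beta_kernel b)
          = I + (beta_kernel_side b R + (- E * I - beta_kernel_side b (- R)))"
    unfolding rect using segs bottom top left right
    by (simp add: contour_integral_join integrable valid_path_join)
  moreover have "winding_number (rectpath a1 a3) (\<i> * pi) = 1"
    using inbox by (rule winding_number_rectpath)
  moreover have "residue (beta_kernel b) (\<i> * pi) = - exp (\<i> * pi * b)"
  proof -
    have "residue (\<lambda>w. exp (b * w) / (1 + exp w)) (\<i> * pi) = exp (b * (\<i> * pi)) / exp (\<i> * pi)"
    proof (rule residue_simple_pole_deriv [where s = S])
      show "\<i> * pi \<in> S"
        unfolding S_def by simp (use pi_gt_zero in linarith)
      show "((\<lambda>w. 1 + exp w) has_field_derivative exp (\<i> * pi)) (at (\<i> * pi))"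
        by (auto intro!: derivative_eq_intros)
      show "1 + exp (\<i> * pi) = 0"
        by (simp add: exp_eq_polar)
    qed (use \<open>open S\<close> \<open>connected S\<close> in \<open>auto intro!: holomorphic_intros\<close>)
    also have "exp (\<i> * pi) = - 1"
      by (simp add: exp_eq_polar)
    finally show ?thesis
      by (simp add: beta_kernel_def [abs_def] mult.commute)
  qed
  moreover have "contour_integral (rectpath a1 a3) (beta_kernel b)
      = 2 * pi * \<i> * (\<Sum>p\<in>{\<i> * pi}. winding_number (rectpath a1 a3) p * residue (beta_kernel b) p)"
  proof (rule Residue_theorem [OF \<open>open S\<close> \<open>connected S\<close> _ holo])
    show "\<forall>z. z \<notin> S \<longrightarrow> winding_number (rectpath a1 a3) z = 0"
      using assms cbox_S by (auto intro!: winding_number_rectpath_outside simp: a1_def a3_def)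
  qed (use pimg in auto)
  ultimately show ?thesis
    by (simp add: I_def E_def algebra_simps)
qed

lemma norm_beta_kernel_side_le:
  assumes "r \<noteq> 0"
  shows "norm (beta_kernel_side b r)
           \<le> 2 * pi * exp (2 * pi * \<bar>Im b\<bar>) * (exp (Re b * r) / \<bar>exp r - 1\<bar>)"
proof -
  define B where "B = exp (2 * pi * \<bar>Im b\<bar>) * (exp (Re b * r) / \<bar>exp r - 1\<bar>)"
  have gap: "0 < \<bar>exp r - 1\<bar>"
    using assms by simp
  have bound: "norm (beta_kernel b w) \<le> B" and nonzero: "1 + exp w \<noteq> 0"
    if "w \<in> closed_segment (Complex r 0) (Complex r (2 * pi))" for w
  proof -
    have w: "Re w = r" "0 \<le> Im w" "Im w \<le> 2 * pi"
      using that pi_gt_zero by (auto simp: closed_segment_same_Re closed_segment_eq_real_ivl)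
    have "- (Im b * Im w) \<le> \<bar>Im b\<bar> * Im w"
      using mult_right_mono [OF abs_ge_minus_self w(2)] by simp
    also have "\<dots> \<le> \<bar>Im b\<bar> * (2 * pi)"
      using w(3) by (simp add: mult_left_mono)
    finally have "norm (exp (b * w)) \<le> exp (2 * pi * \<bar>Im b\<bar>) * exp (Re b * r)"
      by (simp add: norm_exp_eq_Re w(1) exp_add [symmetric] mult.commute)
    moreover have "\<bar>exp r - 1\<bar> \<le> norm (1 + exp w)"
      using norm_triangle_ineq3 [of "exp w" "- 1"] by (simp add: norm_exp_eq_Re w(1) add.commute)
    ultimately have "norm (exp (b * w)) / norm (1 + exp w)
                       \<le> exp (2 * pi * \<bar>Im b\<bar>) * exp (Re b * r) / \<bar>exp r - 1\<bar>"
      using gap by (intro frac_le) auto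
    then show "norm (beta_kernel b w) \<le> B"
      by (simp add: beta_kernel_def norm_divide B_def)
    show "1 + exp w \<noteq> 0"
      using gap \<open>\<bar>exp r - 1\<bar> \<le> norm (1 + exp w)\<close> by auto
  qed
  have "beta_kernel b contour_integrable_on linepath (Complex r 0) (Complex r (2 * pi))"
    unfolding beta_kernel_def [abs_def] using nonzero
    by (intro contour_integrable_continuous_linepath continuous_intros) auto
  then have "norm (beta_kernel_side b r) \<le> B * norm (Complex r (2 * pi) - Complex r 0)"
    unfolding beta_kernel_side_def using bound gap
    by (intro contour_integral_bound_linepath) (auto simp: B_def)
  also have "norm (Complex r (2 * pi) - Complex r 0) = norm (complex_of_real (2 * pi) * \<i>)"
    by (rule arg_cong [where f = norm]) (simp add: complex_eq_iff)
  also have "\<dots> = 2 * pi"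
    using pi_gt_zero by (simp add: norm_mult)
  finally show ?thesis
    by (simp add: B_def mult_ac)
qed

lemma tendsto_beta_kernel_side:
  assumes "0 < Re b" "Re b < 1"
  shows "(beta_kernel_side b \<longlongrightarrow> 0) at_top"
    and "((\<lambda>R. beta_kernel_side b (- R)) \<longlongrightarrow> 0) at_top"
proof -
  define K where "K = 2 * pi * exp (2 * pi * \<bar>Im b\<bar>)"
  have side_le: "\<forall>\<^sub>F R in at_top. norm (beta_kernel_side b (s * R))
                   \<le> K * (exp (Re b * (s * R)) / \<bar>exp (s * R) - 1\<bar>)" if "s \<noteq> 0" for s
    using eventually_gt_at_top [of 0]
  proof eventually_elim
    case (elim R)
    then show ?case
      unfolding K_def using that by (intro norm_beta_kernel_side_le) simp
  qed
  \<comment> \<open>\<open>real_asymp\<close> cannot compare the parameter \<open>Re b\<close> with 1, hence the exponent \<open>-(1 - Re b) R\<close>.\<close>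
  have "exp (- ((1 - Re b) * R)) / \<bar>1 - exp (- R)\<bar> = exp (Re b * R) / \<bar>exp R - 1\<bar>" for R
  proof -
    have "\<bar>exp R - 1\<bar> = \<bar>exp R * (1 - exp (- R))\<bar>"
      by (simp add: algebra_simps exp_minus)
    also have "\<dots> = exp R * \<bar>1 - exp (- R)\<bar>"
      by (simp only: abs_mult abs_of_pos [OF exp_gt_zero])
    finally have "exp (Re b * R) / \<bar>exp R - 1\<bar> = exp (Re b * R - R) / \<bar>1 - exp (- R)\<bar>"
      by (simp add: exp_diff)
    then show ?thesis
      by (simp add: algebra_simps)
  qed
  moreover have "((\<lambda>R. exp (- ((1 - Re b) * R)) / \<bar>1 - exp (- R)\<bar>) \<longlongrightarrow> 0) at_top"
    using assms by real_asymp
  ultimately have "((\<lambda>R. exp (Re b * R) / \<bar>exp R - 1\<bar>) \<longlongrightarrow> 0) at_top"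
    by simp
  then have "((\<lambda>R. K * (exp (Re b * R) / \<bar>exp R - 1\<bar>)) \<longlongrightarrow> 0) at_top"
    by (rule tendsto_mult_right_zero)
  then show "(beta_kernel_side b \<longlongrightarrow> 0) at_top"
    using side_le [of 1] by (auto intro: Lim_null_comparison)
  have "((\<lambda>R. exp (- (Re b * R)) / \<bar>exp (- R) - 1\<bar>) \<longlongrightarrow> 0) at_top"
    using assms by real_asymp
  then have "((\<lambda>R. K * (exp (Re b * - R) / \<bar>exp (- R) - 1\<bar>)) \<longlongrightarrow> 0) at_top"
    by (intro tendsto_mult_right_zero) simp
  then show "((\<lambda>R. beta_kernel_side b (- R)) \<longlongrightarrow> 0) at_top"
    using side_le [of "- 1"] by (auto intro: Lim_null_comparison)
qed

lemma tendsto_integral_symmetric_interval: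
  fixes f :: "real \<Rightarrow> 'a::euclidean_space"
  assumes "integrable lborel f"
  shows "((\<lambda>R. integral {- R..R} f) \<longlongrightarrow> (LINT x|lborel. f x)) at_top"
proof -
  have integrable: "integrable lborel (\<lambda>x. indicator {- R..R} x *\<^sub>R f x)" for R
    using assms by (intro integrable_mult_indicator) auto
  then have "integral {- R..R} f = (LINT x|lborel. indicator {- R..R} x *\<^sub>R f x)" for R
    by (simp add: set_borel_integral_eq_integral(2) [symmetric] set_integrable_def
        set_lebesgue_integral_def)
  moreover have "((\<lambda>R. LINT x|lborel. indicator {- R..R} x *\<^sub>R f x) \<longlongrightarrow> (LINT x|lborel. f x)) at_top"
  proof (rule integral_dominated_convergence_at_top [where w = "\<lambda>x. norm (f x)"])
    show "AE x in lborel. ((\<lambda>R. indicator {- R..R} x *\<^sub>R f x) \<longlongrightarrow> f x) at_top"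
    proof (rule AE_I2)
      fix x :: real
      have "\<forall>\<^sub>F R in at_top. indicator {- R..R} x *\<^sub>R f x = f x"
        using eventually_ge_at_top [of "\<bar>x\<bar>"] by eventually_elim (auto simp: abs_le_iff)
      then show "((\<lambda>R. indicator {- R..R} x *\<^sub>R f x) \<longlongrightarrow> f x) at_top"
        by (rule tendsto_eventually)
    qed
    show "\<forall>\<^sub>F R in at_top. AE x in lborel. norm (indicator {- R..R} x *\<^sub>R f x) \<le> norm (f x)"
      by (simp add: indicator_def)
  qed (use assms integrable in \<open>auto intro: borel_measurable_integrable\<close>)
  ultimately show ?thesis
    by simp
qed

lemma integral_beta_kernel:
  fixes b :: complex
  assumes "0 < Re b" "Re b < 1"
  shows "(LINT s|lborel. beta_kernel b (of_real s)) = pi / sin (pi * b)"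
proof -
  define I where "I = (LINT s|lborel. beta_kernel b (of_real s))"
  define E where "E = exp (\<i> * pi * b)"
  have "((\<lambda>R. (1 - exp (2 * pi * \<i> * b)) * integral {- R..R} (\<lambda>s. beta_kernel b (of_real s))
            + beta_kernel_side b R - beta_kernel_side b (- R))
          \<longlongrightarrow> (1 - exp (2 * pi * \<i> * b)) * I + 0 - 0) at_top"
    unfolding I_def using assms
    by (intro tendsto_intros tendsto_integral_symmetric_interval integrable_beta_kernel
        tendsto_beta_kernel_side)
  moreover have "\<forall>\<^sub>F R in at_top. (1 - exp (2 * pi * \<i> * b)) * integral {- R..R} (\<lambda>s. beta_kernel b (of_real s))
            + beta_kernel_side b R - beta_kernel_side b (- R) = - 2 * pi * \<i> * E"
    using eventually_gt_at_top [of 0] by eventually_elim (unfold E_def, rule beta_kernel_rectangle)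
  ultimately have "(1 - exp (2 * pi * \<i> * b)) * I = - 2 * pi * \<i> * E"
    by (simp add: tendsto_const_iff tendsto_cong)
  moreover have "exp (2 * pi * \<i> * b) = E * E"
    by (simp add: E_def exp_add [symmetric] algebra_simps)
  ultimately have residue_eq: "(1 - E * E) * I = - 2 * pi * \<i> * E"
    by simp
  have "E \<noteq> 0"
    by (simp add: E_def)
  have "sin (pi * b) = (E - inverse E) / (2 * \<i>)"
    by (simp add: sin_exp_eq E_def exp_minus mult_ac)
  also have "\<dots> = - inverse E * (1 - E * E) / (2 * \<i>)"
    using \<open>E \<noteq> 0\<close> by (simp add: field_simps)
  finally have "sin (pi * b) * I = - inverse E * ((1 - E * E) * I) / (2 * \<i>)"
    by simp
  also have "\<dots> = pi"
    using \<open>E \<noteq> 0\<close> by (simp only: residue_eq) (simp add: field_simps)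
  finally have "sin (pi * b) * I = pi" .
  moreover from this have "sin (pi * b) \<noteq> 0"
    by auto
  ultimately show ?thesis
    by (simp add: I_def eq_divide_eq mult.commute)
qed

lemma fbar_shift_scale:
  assumes "0 < \<alpha>" "0 < x"
  shows "fbar \<alpha> T x (T + \<alpha> * ln x + \<alpha> * s)
           = sin (\<alpha> * pi) / (\<alpha> * pi) * x powr \<alpha> * (exp (\<alpha> * s) / (1 + exp s))"
proof -
  have "exp (T + \<alpha> * ln x + \<alpha> * s - T) = x powr \<alpha> * exp (\<alpha> * s)"
    using assms by (simp add: powr_def exp_add mult.commute)
  moreover have "(T + \<alpha> * ln x + \<alpha> * s - T) / \<alpha> = ln x + s"
    using assms by (simp add: field_simps)
  then have "exp ((T + \<alpha> * ln x + \<alpha> * s - T) / \<alpha>) + x = x * (1 + exp s)"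
    using assms by (simp add: exp_add algebra_simps)
  ultimately show ?thesis
    using assms by (simp add: fbar_def)
qed

lemma fourier_fbar:
  fixes \<alpha> T x \<xi> :: real
  assumes "0 < \<alpha>" "\<alpha> < 1" "0 < x"
  shows "fourier (fbar \<alpha> T x) \<xi>
           = of_real (sin (\<alpha> * pi) * x powr \<alpha>) * exp (- \<i> * of_real (\<xi> * (T + \<alpha> * ln x)))
             / sin (of_real (\<alpha> * pi) * (1 - \<i> * of_real \<xi>))"
proof -
  define t where "t = T + \<alpha> * ln x"
  define b where "b = of_real \<alpha> * (1 - \<i> * of_real \<xi>)"
  define C where "C = of_real (sin (\<alpha> * pi) / (\<alpha> * pi) * x powr \<alpha>) * exp (- \<i> * of_real (\<xi> * t))"
  have kernel: "beta_kernel b (of_real s)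
      = of_real (exp (\<alpha> * s) / (1 + exp s)) * exp (- \<i> * of_real (\<alpha> * \<xi> * s))" for s
  proof -
    have "exp (b * of_real s) = of_real (exp (\<alpha> * s)) * exp (- \<i> * of_real (\<alpha> * \<xi> * s))"
      by (simp add: b_def exp_of_real [symmetric] exp_add [symmetric] algebra_simps)
    moreover have "1 + exp (complex_of_real s) = of_real (1 + exp s)"
      by (simp add: exp_of_real)
    ultimately show ?thesis
      by (simp add: beta_kernel_def)
  qed
  have integrand: "of_real (fbar \<alpha> T x (t + \<alpha> * s)) * exp (- \<i> * of_real (\<xi> * (t + \<alpha> * s)))
      = C * beta_kernel b (of_real s)" for s
    using assms unfolding kernel C_def t_def fbar_shift_scale [OF assms(1,3)]
    by (simp add: exp_add [symmetric] algebra_simps)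
  have "fourier (fbar \<alpha> T x) \<xi>
      = \<bar>\<alpha>\<bar> *\<^sub>R (LINT s|lborel. of_real (fbar \<alpha> T x (t + \<alpha> * s))
                        * exp (- \<i> * of_real (\<xi> * (t + \<alpha> * s))))"
    unfolding fourier_def using assms(1) by (subst lborel_integral_real_affine [where c = \<alpha> and t = t]) auto
  also have "\<dots> = of_real \<alpha> * C * (LINT s|lborel. beta_kernel b (of_real s))"
    using assms(1) by (simp only: integrand) (simp add: scaleR_conv_of_real)
  also have "\<dots> = of_real \<alpha> * C * (pi / sin (pi * b))"
    using assms by (simp add: integral_beta_kernel b_def)
  finally show ?thesis
    using assms(1) by (simp add: C_def t_def b_def field_simps)
qed

lemma norm_fourier_fbar_le:
  fixes \<alpha> T x \<xi> :: real
  assumes "0 < \<alpha>" "\<alpha> < 1" "0 < x" "x \<le> 1"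
  shows "norm (fourier (fbar \<alpha> T x) \<xi>) \<le> 2 * exp (- (pi * \<alpha> * \<bar>\<xi>\<bar>))"
proof -
  define z where "z = of_real (\<alpha> * pi) * (1 - \<i> * of_real \<xi>)"
  define y where "y = pi * \<alpha> * \<xi>"
  have "0 < sin (\<alpha> * pi)"
    using assms by (intro sin_gt_zero) auto
  have "x powr \<alpha> \<le> 1"
    using assms by (intro powr_le1) auto
  have "\<bar>Re (sin z)\<bar> = sin (\<alpha> * pi) * (exp y + exp (- y)) / 2"
    using \<open>0 < sin (\<alpha> * pi)\<close> by (simp add: Re_sin z_def y_def add_pos_pos mult_ac)
  then have sin_z: "sin (\<alpha> * pi) * (exp y + exp (- y)) / 2 \<le> norm (sin z)"
    using abs_Re_le_cmod [of "sin z"] by simp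
  have "norm (fourier (fbar \<alpha> T x) \<xi>) = sin (\<alpha> * pi) * x powr \<alpha> / norm (sin z)"
    using fourier_fbar [OF assms(1-3)] \<open>0 < sin (\<alpha> * pi)\<close>
    by (simp add: z_def norm_mult norm_divide norm_exp_eq_Re)
  also have "\<dots> \<le> sin (\<alpha> * pi) * 1 / (sin (\<alpha> * pi) * (exp y + exp (- y)) / 2)"
    using \<open>0 < sin (\<alpha> * pi)\<close> \<open>x powr \<alpha> \<le> 1\<close> sin_z
    by (intro frac_le mult_pos_pos divide_pos_pos add_pos_pos) auto
  also have "\<dots> = 2 / (exp y + exp (- y))"
    using \<open>0 < sin (\<alpha> * pi)\<close> by simp
  also have "\<dots> \<le> 2 / exp \<bar>y\<bar>"
    by (intro divide_left_mono) (auto simp: abs_if add_pos_pos)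
  also have "\<dots> = 2 * exp (- (pi * \<alpha> * \<bar>\<xi>\<bar>))"
    using assms by (simp add: y_def abs_mult exp_minus field_simps)
  finally show ?thesis .
qed

lemma has_sum_power_abs_nonzero_int:
  fixes q :: real
  assumes "0 \<le> q" "q < 1"
  shows "((\<lambda>n::int. q ^ nat \<bar>n\<bar>) has_sum (2 * q / (1 - q))) (UNIV - {0})"
proof -
  define g where "g n = q ^ nat \<bar>n\<bar>" for n :: int
  define P where "P = range (\<lambda>k::nat. int k + 1)"
  have "(\<lambda>k::nat. q * q ^ k) sums (q * (1 / (1 - q)))"
    using assms by (intro sums_mult geometric_sums) auto
  then have "((\<lambda>k::nat. q * q ^ k) has_sum (q / (1 - q))) UNIV"
    using assms by (auto intro: sums_nonneg_imp_has_sum)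
  moreover have "g \<circ> (\<lambda>k::nat. int k + 1) = (\<lambda>k. q * q ^ k)"
    by (auto simp: g_def nat_add_distrib)
  ultimately have positive: "(g has_sum (q / (1 - q))) P"
    unfolding P_def by (subst has_sum_reindex) (auto simp: inj_on_def)
  moreover have "g \<circ> uminus = g"
    by (auto simp: g_def)
  ultimately have negative: "(g has_sum (q / (1 - q))) (uminus ` P)"
    by (subst has_sum_reindex) auto
  have "P \<union> uminus ` P = UNIV - {0}"
  proof (intro equalityI subsetI)
    fix n :: int
    assume "n \<in> UNIV - {0}"
    then have "n = int (nat (n - 1)) + 1 \<or> n = - (int (nat (- n - 1)) + 1)"
      by auto
    then show "n \<in> P \<union> uminus ` P"
      unfolding P_def by blast
  qed (auto simp: P_def)
  moreover have "P \<inter> uminus ` P = {}"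
    by (auto simp: P_def)
  ultimately show ?thesis
    using has_sum_Un_disjoint [OF positive negative] by (simp add: g_def [abs_def])
qed

lemma norm_fourier_fbar_lattice_le:
  fixes \<alpha> T h x :: real and n :: int
  assumes "0 < \<alpha>" "\<alpha> < 1" "0 < h" "0 < x" "x \<le> 1"
  shows "norm (fourier (fbar \<alpha> T x) (2 * real_of_int n * pi / h))
           \<le> 2 * exp (- (2 * pi\<^sup>2 * \<alpha> / h)) ^ nat \<bar>n\<bar>"
proof -
  have "pi * \<alpha> * \<bar>2 * real_of_int n * pi / h\<bar> = real (nat \<bar>n\<bar>) * (2 * pi\<^sup>2 * \<alpha> / h)"
    using assms by (simp add: abs_mult power2_eq_square field_simps)
  then show ?thesis
    using norm_fourier_fbar_le [OF assms(1,2,4,5), of T "2 * real_of_int n * pi / h"]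
    by (simp add: exp_of_nat_mult [symmetric])
qed

theorem theorem3p2:
  shows "\<exists>C::real. \<forall>\<alpha> T h x::real.
           0 < \<alpha> \<and> \<alpha> < 1 \<and> 0 < T \<and> 0 < h \<and> 0 < x \<and> x \<le> 1 \<longrightarrow>
           (\<lambda>n::int. fourier (fbar \<alpha> T x) (2 * real_of_int n * pi / h)) summable_on (UNIV - {0})
           \<and> norm (\<Sum>\<^sub>\<infinity>n\<in>UNIV - {0::int}. fourier (fbar \<alpha> T x) (2 * real_of_int n * pi / h))
               \<le> C / (exp (2 * pi\<^sup>2 * \<alpha> / h) - 1)"
proof (intro exI [of _ 4] allI impI)
  fix \<alpha> T h x :: real
  assume "0 < \<alpha> \<and> \<alpha> < 1 \<and> 0 < T \<and> 0 < h \<and> 0 < x \<and> x \<le> 1"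
  then have \<alpha>: "0 < \<alpha>" "\<alpha> < 1" and "0 < h" and x: "0 < x" "x \<le> 1"
    by auto
  define q where "q = exp (- (2 * pi\<^sup>2 * \<alpha> / h))"
  let ?F = "\<lambda>n::int. fourier (fbar \<alpha> T x) (2 * real_of_int n * pi / h)"
  have bound: "norm (?F n) \<le> 2 * q ^ nat \<bar>n\<bar>" for n
    unfolding q_def using \<alpha> \<open>0 < h\<close> x by (rule norm_fourier_fbar_lattice_le)
  have "0 < 2 * pi\<^sup>2 * \<alpha> / h"
    using \<alpha> \<open>0 < h\<close> by simp
  then have "0 < q" "q < 1"
    by (auto simp: q_def)
  then have sum: "((\<lambda>n. 2 * q ^ nat \<bar>n\<bar>) has_sum (4 * q / (1 - q))) (UNIV - {0})"
    using has_sum_cmult_right [OF has_sum_power_abs_nonzero_int, of q 2] by simp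
  have "(\<lambda>n. norm (?F n)) summable_on (UNIV - {0})"
    using has_sum_imp_summable [OF sum] by (rule Infinite_Sum.abs_summable_on_comparison_test') (rule bound)
  then have summable: "?F summable_on (UNIV - {0})"
    by (rule Infinite_Sum.abs_summable_summable)
  have "norm (\<Sum>\<^sub>\<infinity>n\<in>UNIV - {0}. ?F n) \<le> 4 * q / (1 - q)"
    using has_sum_infsum [OF summable] sum by (rule norm_infsum_le) (rule bound)
  also have "4 * q / (1 - q) = 4 / (exp (2 * pi\<^sup>2 * \<alpha> / h) - 1)"
    using \<open>0 < 2 * pi\<^sup>2 * \<alpha> / h\<close> by (simp add: q_def exp_minus field_simps)
  finally show "?F summable_on (UNIV - {0})
      \<and> norm (\<Sum>\<^sub>\<infinity>n\<in>UNIV - {0}. ?F n) \<le> 4 / (exp (2 * pi\<^sup>2 * \<alpha> / h) - 1)"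
    using summable by simp
qed

end
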